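(* Let $d\ge1$, $s\in(0,1/2)$, $\Omega\subset\mathbb{R}^d$ a bounded domain and $g\in L^\infty(\Omega^c)$. For $H\ge 1$ let $\Omega_H$, $\eta_H$, $g_H$, $T_H$, $E_H$ be as in the context. Then for every $v\in\mathbb{V}^g\cap L^\infty(\mathbb{R}^d)$ and every $w\in\mathbb{V}^{g_H}\cap L^\infty(\mathbb{R}^d)$, \[ \big|I_s[v]-I_s[T_Hv]\big|\le C\,H^{-1-2s},\qquad \big|I_s[w]-I_s[E_Hw]\big|\le C\,H^{-1-2s}, \] where $C$ depends only on $d$, $s$, $\Omega$, the constants in the definition of $\Omega_H$, and on $\|v\|_{L^\infty(\mathbb{R}^d)}$ (respectively $\|w\|_{L^\infty(\mathbb{R}^d)}$ and $\|g\|_{L^\infty(\Omega^c)}$), but not on $H$.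
   Context: $\Omega^c=\mathbb{R}^d\setminus\Omega$, $Q_\Omega := (\mathbb{R}^d\times\mathbb{R}^d)\setminus(\Omega^c\times\Omega^c)$, $F_s(\rho) := \int_0^\rho \frac{\rho-r}{(1+r^2)^{(d+1+2s)/2}}\,dr$, and $I_s[u] := \iint_{Q_\Omega} F_s\!\left(\frac{u(x)-u(y)}{|x-y|}\right)\frac{dx\,dy}{|x-y|^{d+2s-1}}$. For $g\in L^\infty(\Omega^c)$, $\mathbb{V}^g := \{v:\mathbb{R}^d\to\mathbb{R} : v|_\Omega\in W^{2s}_1(\Omega),\ v=g \text{ in }\Omega^c\}$. For $H>0$, $\Omega_H$ is a bounded open set containing $\Omega$ such that $c_1H\le \operatorname{dist}(x,\overline\Omega)\le c_2 H$ for all $x\in\partial\Omega_H$, with fixed constants $0<c_1\le c_2$. The cutoff $\eta_H\in C^\infty(\Omega^c)$ satisfies $0\le\eta_H\le1$, $\operatorname{supp}\eta_H\subset\overline{\Omega}_{H+1}\setminus\Omega$, and $\eta_H=1$ on $\Omega_H\setminus\Omega$. Set $g_H:=g\eta_H$. The truncation operator $T_H:\mathbb{V}^g\to\mathbb{V}^{g_H}$ is $T_Hv := v$ in $\Omega$ and $T_Hv:=v\eta_H$ in $\Omega^c$; the extension operator $E_H:\mathbb{V}^{g_H}\to\mathbb{V}^g$ is $E_Hw:=w$ in $\Omega$ and $E_Hw := w+(1-\eta_H)g$ in $\Omega^c$. *)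

theory Defs
  imports "HOL-Analysis.Analysis"
begin

fun iter_dderiv :: "('a::euclidean_space \<Rightarrow> real) \<Rightarrow> 'a list \<Rightarrow> 'a \<Rightarrow> real" where
  "iter_dderiv f [] = f"
| "iter_dderiv f (v # vs) = (\<lambda>x. frechet_derivative (iter_dderiv f vs) (at x) v)"

(* C^\<infinity> on an open set S: all iterated derivatives exist (hence are continuous) *)
definition smooth_on :: "'a::euclidean_space set \<Rightarrow> ('a \<Rightarrow> real) \<Rightarrow> bool" where
  "smooth_on S f \<longleftrightarrow> (\<forall>vs. \<forall>x\<in>S. iter_dderiv f vs differentiable (at x))"

definition F_s :: "nat \<Rightarrow> real \<Rightarrow> real \<Rightarrow> real" where
  "F_s d s \<rho> = (LBINT r=0..\<rho>. (\<rho> - r) / (1 + r\<^sup>2) powr ((real d + 1 + 2 * s) / 2))"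

definition Q_set :: "'a set \<Rightarrow> ('a \<times> 'a) set" where
  "Q_set \<Omega> = UNIV - ((- \<Omega>) \<times> (- \<Omega>))"

(* I_s[u]; the integrand is nonnegative, so it is taken as an extended nonnegative integral
   with respect to Lebesgue measure on R^d x R^d *)
definition I_s :: "real \<Rightarrow> 'a::euclidean_space set \<Rightarrow> ('a \<Rightarrow> real) \<Rightarrow> ennreal" where
  "I_s s \<Omega> u = (\<integral>\<^sup>+ z. indicator (Q_set \<Omega>) z *
      ennreal (F_s DIM('a) s ((u (fst z) - u (snd z)) / norm (fst z - snd z))
               / norm (fst z - snd z) powr (real DIM('a) + 2 * s - 1)) \<partial>lebesgue)"

definition W_frac_1 :: "real \<Rightarrow> 'a::euclidean_space set \<Rightarrow> ('a \<Rightarrow> real) \<Rightarrow> bool" where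
  "W_frac_1 \<sigma> \<Omega> u \<longleftrightarrow> set_integrable lebesgue \<Omega> u \<and>
     (\<integral>\<^sup>+ z. indicator (\<Omega> \<times> \<Omega>) z *
        ennreal (\<bar>u (fst z) - u (snd z)\<bar> / norm (fst z - snd z) powr (real DIM('a) + \<sigma>)) \<partial>lebesgue) < \<infinity>"

definition V_space :: "real \<Rightarrow> 'a::euclidean_space set \<Rightarrow> ('a \<Rightarrow> real) \<Rightarrow> ('a \<Rightarrow> real) set" where
  "V_space s \<Omega> g = {v. W_frac_1 (2 * s) \<Omega> v \<and> (\<forall>x\<in>- \<Omega>. v x = g x)}"

definition Linf_bound :: "'a::euclidean_space set \<Rightarrow> ('a \<Rightarrow> real) \<Rightarrow> real \<Rightarrow> bool" where
  "Linf_bound A u M \<longleftrightarrow> set_borel_measurable lebesgue A u \<and> (AE x in lebesgue. x \<in> A \<longrightarrow> \<bar>u x\<bar> \<le> M)"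

definition trunc_op :: "'a set \<Rightarrow> ('a \<Rightarrow> real) \<Rightarrow> ('a \<Rightarrow> real) \<Rightarrow> 'a \<Rightarrow> real" where
  "trunc_op \<Omega> \<eta> v = (\<lambda>x. if x \<in> \<Omega> then v x else v x * \<eta> x)"

definition ext_op :: "'a set \<Rightarrow> ('a \<Rightarrow> real) \<Rightarrow> ('a \<Rightarrow> real) \<Rightarrow> ('a \<Rightarrow> real) \<Rightarrow> 'a \<Rightarrow> real" where
  "ext_op \<Omega> \<eta> g w = (\<lambda>x. if x \<in> \<Omega> then w x else w x + (1 - \<eta> x) * g x)"

end

theory Submission
  imports Defs
begin

text \<open>If u and w agree on a neighbourhood U of \<Omega> whose boundary stays at distance at least
  R from \<Omega>, the integrands of I_s[u] and I_s[w] differ only at pairs (x, y) with one point in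
  \<Omega> and the other outside U, hence with |x - y| \<ge> R. Since F_s(\<rho>) \<le> \<rho>^2/2, a bound |u| \<le> B
  makes the integrand of I_s[u] at most 2 B^2 |x - y|^(-d-2s-1) there, and summing this kernel
  over the dyadic shells 2^k R \<le> |x - y| < 2^(k+1) R gives O(|\<Omega>| R^(-1-2s)).
  Both T_H v and E_H w agree with their arguments on \<Omega>_H, where R = c1 H, and stay bounded by
  twice the given L^\<infinity> bound.\<close>

text \<open>Only k has to be measurable: nothing is known about the measurability of the integrand
  of I_s[w] for a general w.\<close>

lemma nn_integral_add_le:
  assumes k: "k \<in> borel_measurable M"
  shows "(\<integral>\<^sup>+ x. f x + k x \<partial>M) \<le> integral\<^sup>N M f + integral\<^sup>N M k"
proof -
  have "integral\<^sup>S M g \<le> integral\<^sup>N M f + integral\<^sup>N M k"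
    if g: "simple_function M g" "g \<le> (\<lambda>x. f x + k x)" "\<forall>x. g x < top" for g
  proof -
    have gm: "g \<in> borel_measurable M" using g(1) by (rule borel_measurable_simple_function)
    have gt: "\<And>x. g x \<noteq> top" using g(3) by (metis less_irrefl)
    have "integral\<^sup>S M g = integral\<^sup>N M g" using g(1) by (simp add: nn_integral_eq_simple_integral)
    also have "\<dots> \<le> (\<integral>\<^sup>+ x. (g x - k x) + k x \<partial>M)"
    proof (intro nn_integral_mono)
      fix x show "g x \<le> g x - k x + k x"
        by (cases "k x \<le> g x") (auto simp: diff_add_cancel_ennreal diff_eq_0_ennreal g(3))
    qed
    also have "\<dots> = (\<integral>\<^sup>+ x. g x - k x \<partial>M) + integral\<^sup>N M k"
      using gm k by (intro nn_integral_add) auto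
    also have "(\<integral>\<^sup>+ x. g x - k x \<partial>M) \<le> integral\<^sup>N M f"
      using g(2) gt by (intro nn_integral_mono) (auto simp: le_fun_def ennreal_minus_le_iff add.commute)
    finally show ?thesis by (simp add: add_right_mono)
  qed
  then show ?thesis unfolding nn_integral_def_finite[of M "\<lambda>x. f x + k x"] by (intro SUP_least) auto
qed

lemma AE_lebesgue_pair:
  assumes "AE x in (lebesgue :: 'a::euclidean_space measure). P x"
  shows "AE z in (lebesgue :: ('a \<times> 'a) measure). P (fst z) \<and> P (snd z)"
proof -
  have "AE x in lborel. P x" using assms by (simp add: AE_completion_iff)
  then obtain N where "{x \<in> space lborel. \<not> P x} \<subseteq> N" "emeasure lborel N = 0" "N \<in> sets lborel"
    by (rule AE_E)
  then have N: "{x \<in> space lborel. \<not> P x} \<subseteq> N" "N \<in> null_sets (lborel :: 'a measure)" by auto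
  have "N \<times> UNIV \<in> null_sets (lborel \<Otimes>\<^sub>M (lborel :: 'a measure))"
    using N(2) by (intro lborel.times_in_null_sets1) auto
  moreover have "UNIV \<times> N \<in> null_sets (lborel \<Otimes>\<^sub>M (lborel :: 'a measure))"
    using N(2) by (intro lborel.times_in_null_sets2) auto
  ultimately have "N \<times> UNIV \<union> UNIV \<times> N \<in> null_sets (lborel \<Otimes>\<^sub>M (lborel :: 'a measure))"
    by (rule null_sets.Un)
  then have nn: "N \<times> UNIV \<union> UNIV \<times> N \<in> null_sets (lborel :: ('a \<times> 'a) measure)"
    by (simp add: lborel_prod)
  have "AE z in (lborel :: ('a \<times> 'a) measure). P (fst z) \<and> P (snd z)"
    by (rule AE_I'[OF nn]) (use N(1) in auto)
  then show ?thesis by (rule AE_completion)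
qed

lemma nn_integral_lebesgue_pair_swap:
  fixes f :: "'a::euclidean_space \<times> 'a \<Rightarrow> ennreal"
  assumes f[measurable]: "f \<in> borel_measurable (lborel \<Otimes>\<^sub>M lborel)"
  shows "(\<integral>\<^sup>+ z. f (snd z, fst z) \<partial>lebesgue) = (\<integral>\<^sup>+ z. f z \<partial>lebesgue)"
proof -
  have swap: "(\<lambda>z. f (snd z, fst z)) \<in> borel_measurable (lborel \<Otimes>\<^sub>M lborel)"
    by measurable
  have "(\<integral>\<^sup>+ z. f (snd z, fst z) \<partial>lebesgue) = (\<integral>\<^sup>+ x. \<integral>\<^sup>+ y. f (y, x) \<partial>lborel \<partial>lborel)"
    using lborel.nn_integral_fst[OF swap] by (simp add: nn_integral_completion lborel_prod)
  also have "\<dots> = (\<integral>\<^sup>+ z. f z \<partial>lebesgue)"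
    using lborel_pair.nn_integral_snd[OF f] by (simp add: nn_integral_completion lborel_prod)
  finally show ?thesis .
qed

lemma interval_integral_mono_Icc:
  fixes a b :: real and f g :: "real \<Rightarrow> real"
  assumes "a \<le> b" "continuous_on {a..b} f" "continuous_on {a..b} g"
    and "\<And>x. x \<in> {a..b} \<Longrightarrow> f x \<le> g x"
  shows "(LBINT x=a..b. f x) \<le> (LBINT x=a..b. g x)"
proof -
  have "(LBINT x:{a..b}. f x) \<le> (LBINT x:{a..b}. g x)"
    using assms by (intro set_integral_mono borel_integrable_atLeastAtMost')
  then show ?thesis
    using assms(1) by (simp add: interval_integral_Icc)
qed

lemma interval_integral_ramp: "(LBINT r=0..\<rho>. \<rho> - r) = \<rho>\<^sup>2 / 2"
proof -
  have "((\<lambda>x. \<rho> * x - x\<^sup>2 / 2) has_vector_derivative (\<rho> - x)) (at x within S)" for x S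
    by (auto intro!: derivative_eq_intros simp: has_real_derivative_iff_has_vector_derivative[symmetric])
  then have "(LBINT r=0..\<rho>. \<rho> - r) = (\<rho> * \<rho> - \<rho>\<^sup>2 / 2) - (\<rho> * 0 - 0\<^sup>2 / 2)"
    using interval_integral_FTC_finite[where a=0 and b=\<rho> and f="\<lambda>r. \<rho> - r" and F="\<lambda>x. \<rho> * x - x\<^sup>2 / 2"]
    by (simp add: continuous_intros zero_ereal_def)
  then show ?thesis by (simp add: power2_eq_square)
qed

lemma F_s_le_half_square:
  assumes "0 \<le> s"
  shows "F_s d s \<rho> \<le> \<rho>\<^sup>2 / 2"
proof -
  define e where "e = (real d + 1 + 2 * s) / 2"
  define f where "f r = (\<rho> - r) / (1 + r\<^sup>2) powr e" for r :: real
  have weight: "1 \<le> (1 + r\<^sup>2) powr e" for r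
    using assms by (intro ge_one_powr_ge_zero) (auto simp: e_def)
  have cont: "continuous_on A f" for A
    unfolding f_def by (intro continuous_intros) (auto simp: add_nonneg_eq_0_iff)
  have F: "F_s d s \<rho> = (LBINT r=0..\<rho>. f r)"
    unfolding F_s_def f_def e_def ..
  show ?thesis
  proof (cases "0 \<le> \<rho>")
    case True
    have "(LBINT r=0..\<rho>. f r) \<le> (LBINT r=0..\<rho>. \<rho> - r)"
      unfolding zero_ereal_def using True cont weight
      by (intro interval_integral_mono_Icc)
      (auto simp: f_def divide_le_eq intro!: continuous_intros mult_le_cancel_left1[THEN iffD2])
    then show ?thesis by (simp add: F interval_integral_ramp)
  next
    case False
    have "\<rho> - r \<le> f r" if "\<rho> \<le> r" for r
      using mult_left_mono_neg[OF weight[of r], of "\<rho> - r"] that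
      by (simp add: f_def le_divide_eq)
    then have "(LBINT r=\<rho>..0. \<rho> - r) \<le> (LBINT r=\<rho>..0. f r)"
      unfolding zero_ereal_def using False cont
      by (intro interval_integral_mono_Icc) (auto intro!: continuous_intros)
    then have "F_s d s \<rho> \<le> (LBINT r=0..\<rho>. \<rho> - r)"
      unfolding F interval_integral_endpoints_reverse[of 0 \<rho>] by simp
    then show ?thesis by (simp add: interval_integral_ramp)
  qed
qed

definition dyadic_tail_bound :: "nat \<Rightarrow> real \<Rightarrow> real \<Rightarrow> real" where
  "dyadic_tail_bound d p R =
     2 ^ d * unit_ball_vol (real d) * R powr (real d - p) / (1 - 2 powr (real d - p))"

lemma dyadic_tail_bound_nonneg: "real d < p \<Longrightarrow> 0 \<le> dyadic_tail_bound d p R"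
  unfolding dyadic_tail_bound_def using powr_less_one[of 2 "real d - p"]
  by (intro divide_nonneg_nonneg) auto

lemma dyadic_tail_bound_mult:
  "0 < c \<Longrightarrow> 0 < R \<Longrightarrow>
     dyadic_tail_bound d p (c * R) = dyadic_tail_bound d p c * R powr (real d - p)"
  by (simp add: dyadic_tail_bound_def powr_mult)

lemma dist_powr_le_dyadic_sum:
  fixes c y :: "'a::metric_space"
  assumes R: "0 < R" and p: "0 \<le> p" and y: "R \<le> dist c y"
  shows "ennreal (dist c y powr - p)
    \<le> (\<Sum>k. ennreal ((2 ^ k * R) powr - p) * indicator (ball c (2 ^ (k + 1) * R)) y)"
proof -
  define k where "k = nat \<lfloor>log 2 (dist c y / R)\<rfloor>"
  have ratio: "1 \<le> dist c y / R" using y R by auto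
  then have lg: "0 \<le> log 2 (dist c y / R)" by auto
  have "(2::real) ^ k = 2 powr real k" by (simp add: powr_realpow)
  also have "\<dots> \<le> 2 powr log 2 (dist c y / R)" unfolding k_def using lg by (intro powr_mono) auto
  also have "\<dots> = dist c y / R" using ratio by simp
  finally have lower: "2 ^ k * R \<le> dist c y" using R by (simp add: le_divide_eq)
  have "dist c y / R = 2 powr log 2 (dist c y / R)" using ratio by simp
  also have "\<dots> < 2 powr real (k + 1)" unfolding k_def using lg by (intro powr_less_mono) linarith+
  also have "\<dots> = 2 ^ (k + 1)" by (rule powr_realpow) simp
  finally have upper: "y \<in> ball c (2 ^ (k + 1) * R)" using R by (simp add: divide_less_eq mult.commute)
  define F where "F i = ennreal ((2 ^ i * R) powr - p) * indicator (ball c (2 ^ (i + 1) * R)) y" for i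
  have "ennreal (dist c y powr - p) \<le> F k"
    using lower upper R p by (auto simp: F_def intro!: ennreal_leI powr_mono2')
  also have "F k \<le> suminf F"
    using sum_le_suminf[OF summableI, of "{k}" F] by simp
  finally show ?thesis unfolding F_def .
qed

lemma nn_integral_dyadic_ball:
  fixes c :: "'a::euclidean_space"
  defines "d \<equiv> DIM('a)"
  assumes "0 < R"
  shows "(\<integral>\<^sup>+ y. ennreal ((2 ^ k * R) powr - p) * indicator (ball c (2 ^ (k + 1) * R)) y \<partial>lborel)
    = ennreal (2 ^ d * unit_ball_vol (real d) * R powr (real d - p) * (2 powr (real d - p)) ^ k)"
proof -
  have "(2 ^ k * R) powr - p = 2 powr (- p * k) * R powr - p"
    using assms by (simp add: powr_mult powr_realpow[symmetric] powr_powr mult.commute)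
  moreover have "(2 ^ (k + 1) * R) ^ d = 2 ^ d * 2 powr (real d * k) * R powr real d"
    using assms by (simp add: power_mult_distrib powr_realpow[symmetric] powr_powr power_add
        powr_power mult.commute)
  moreover have "(2 powr (real d - p)) ^ k = 2 powr (- p * k) * 2 powr (real d * k)"
    by (simp add: powr_realpow[symmetric] powr_powr powr_power powr_add[symmetric] algebra_simps)
  moreover have "R powr (real d - p) = R powr real d * R powr - p"
    by (simp add: powr_add[symmetric])
  ultimately have "(2 ^ k * R) powr - p * (unit_ball_vol (real d) * (2 ^ (k + 1) * R) ^ d)
      = 2 ^ d * unit_ball_vol (real d) * R powr (real d - p) * (2 powr (real d - p)) ^ k"
    by (simp add: algebra_simps)
  then show ?thesis
    using assms by (simp add: nn_integral_cmult_indicator emeasure_ball ennreal_mult[symmetric])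
qed

lemma nn_integral_dist_powr_tail_le:
  fixes c :: "'a::euclidean_space"
  assumes R: "0 < R" and p: "real DIM('a) < p"
  shows "(\<integral>\<^sup>+ y. indicator {y. R \<le> dist c y} y * ennreal (dist c y powr - p) \<partial>lborel)
    \<le> ennreal (dyadic_tail_bound DIM('a) p R)"
proof -
  define d where "d = DIM('a)"
  define V where "V = unit_ball_vol (real d)"
  define A where "A = 2 ^ d * V * R powr (real d - p)"
  define q where "q = 2 powr (real d - p)"
  have q: "0 \<le> q" "q < 1" unfolding q_def using p d_def by (auto intro!: powr_less_one)
  have A: "0 \<le> A" unfolding A_def V_def by auto
  have "(\<integral>\<^sup>+ y. indicator {y. R \<le> dist c y} y * ennreal (dist c y powr - p) \<partial>lborel)
      \<le> (\<integral>\<^sup>+ y. (\<Sum>k. ennreal ((2 ^ k * R) powr - p) * indicator (ball c (2 ^ (k + 1) * R)) y) \<partial>lborel)"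
  proof (intro nn_integral_mono)
    fix y
    have "0 \<le> p" using p of_nat_0_le_iff[of "DIM('a)"] by linarith
    then show "indicator {y. R \<le> dist c y} y * ennreal (dist c y powr - p)
      \<le> (\<Sum>k. ennreal ((2 ^ k * R) powr - p) * indicator (ball c (2 ^ (k + 1) * R)) y)"
    proof (cases "R \<le> dist c y")
      case True
      then show ?thesis using dist_powr_le_dyadic_sum[OF R \<open>0 \<le> p\<close> True] by simp
    qed simp
  qed
  also have "\<dots> = (\<Sum>k. \<integral>\<^sup>+ y. ennreal ((2 ^ k * R) powr - p) * indicator (ball c (2 ^ (k + 1) * R)) y \<partial>lborel)"
    by (intro nn_integral_suminf borel_measurable_times_ennreal borel_measurable_const
        borel_measurable_indicator) simp
  also have "\<dots> = (\<Sum>k. ennreal (A * q ^ k))"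
    unfolding A_def q_def V_def d_def by (intro suminf_cong nn_integral_dyadic_ball R)
  also have "\<dots> = ennreal (A / (1 - q))"
  proof -
    have sums: "(\<lambda>k. A * q ^ k) sums (A / (1 - q))"
      using q sums_mult[OF geometric_sums, of q A] by simp
    then have "(\<Sum>k. ennreal (A * q ^ k)) = ennreal (\<Sum>k. A * q ^ k)"
      using A q by (intro suminf_ennreal2) (auto simp: sums_iff)
    then show ?thesis using sums by (simp add: sums_iff)
  qed
  finally show ?thesis unfolding A_def q_def V_def d_def dyadic_tail_bound_def .
qed

definition tail_kernel :: "'a::metric_space set \<Rightarrow> real \<Rightarrow> real \<Rightarrow> 'a \<times> 'a \<Rightarrow> ennreal" where
  "tail_kernel \<Omega> R p z = indicator {z. fst z \<in> \<Omega> \<and> R \<le> dist (fst z) (snd z)} z *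
     ennreal (dist (fst z) (snd z) powr - p)"

lemma tail_kernel_measurable:
  fixes \<Omega> :: "'a::euclidean_space set"
  assumes "\<Omega> \<in> sets borel"
  shows "tail_kernel \<Omega> R p \<in> borel_measurable (lborel \<Otimes>\<^sub>M lborel)"
proof -
  have [measurable]: "\<Omega> \<in> sets lborel" using assms by simp
  show ?thesis unfolding tail_kernel_def by measurable
qed

lemma nn_integral_tail_kernel_le:
  fixes \<Omega> :: "'a::euclidean_space set"
  assumes R: "0 < R" and p: "real DIM('a) < p" and \<Omega>: "\<Omega> \<in> sets borel"
  shows "(\<integral>\<^sup>+ z. tail_kernel \<Omega> R p z \<partial>lebesgue)
    \<le> emeasure lborel \<Omega> * ennreal (dyadic_tail_bound DIM('a) p R)"
proof -
  have "(\<integral>\<^sup>+ z. tail_kernel \<Omega> R p z \<partial>lebesgue)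
      = (\<integral>\<^sup>+ x. \<integral>\<^sup>+ y. tail_kernel \<Omega> R p (x, y) \<partial>lborel \<partial>lborel)"
    using lborel.nn_integral_fst[OF tail_kernel_measurable[OF \<Omega>]]
    by (simp add: nn_integral_completion lborel_prod)
  also have "\<dots> \<le> (\<integral>\<^sup>+ x. ennreal (dyadic_tail_bound DIM('a) p R) * indicator \<Omega> x \<partial>lborel)"
  proof (intro nn_integral_mono)
    fix x :: 'a
    show "(\<integral>\<^sup>+ y. tail_kernel \<Omega> R p (x, y) \<partial>lborel)
      \<le> ennreal (dyadic_tail_bound DIM('a) p R) * indicator \<Omega> x"
    proof (cases "x \<in> \<Omega>")
      case True
      have "(\<integral>\<^sup>+ y. tail_kernel \<Omega> R p (x, y) \<partial>lborel)
          = (\<integral>\<^sup>+ y. indicator {y. R \<le> dist x y} y * ennreal (dist x y powr - p) \<partial>lborel)"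
        using True by (intro nn_integral_cong) (simp add: tail_kernel_def indicator_def)
      then show ?thesis using True nn_integral_dist_powr_tail_le[OF R p] by simp
    qed (simp add: tail_kernel_def)
  qed
  also have "\<dots> = ennreal (dyadic_tail_bound DIM('a) p R) * emeasure lborel \<Omega>"
    using \<Omega> by (simp add: nn_integral_cmult_indicator)
  finally show ?thesis by (simp add: mult.commute)
qed

definition I_s_integrand :: "real \<Rightarrow> 'a::euclidean_space set \<Rightarrow> ('a \<Rightarrow> real) \<Rightarrow> 'a \<times> 'a \<Rightarrow> ennreal" where
  "I_s_integrand s \<Omega> u z = indicator (Q_set \<Omega>) z *
     ennreal (F_s DIM('a) s ((u (fst z) - u (snd z)) / norm (fst z - snd z))
       / norm (fst z - snd z) powr (real DIM('a) + 2 * s - 1))"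

lemma I_s_eq_nn_integral_integrand: "I_s s \<Omega> u = (\<integral>\<^sup>+ z. I_s_integrand s \<Omega> u z \<partial>lebesgue)"
  unfolding I_s_def I_s_integrand_def ..

lemma I_s_integrand_le_dist_powr:
  fixes u :: "'a::euclidean_space \<Rightarrow> real"
  assumes s: "0 \<le> s" and B: "\<bar>u x\<bar> \<le> B" "\<bar>u y\<bar> \<le> B" and xy: "x \<noteq> y"
  shows "I_s_integrand s \<Omega> u (x, y)
    \<le> ennreal (2 * B\<^sup>2 * dist x y powr - (real DIM('a) + 2 * s + 1))"
proof -
  define t where "t = dist x y"
  define q where "q = real DIM('a) + 2 * s - 1"
  define \<rho> where "\<rho> = (u x - u y) / t"
  have t: "0 < t" using xy by (simp add: t_def)
  have "\<bar>\<rho>\<bar> \<le> 2 * B / t"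
    using B t abs_triangle_ineq4[of "u x" "u y"] by (simp add: \<rho>_def abs_divide divide_right_mono)
  then have "\<rho>\<^sup>2 \<le> (2 * B / t)\<^sup>2"
    by (metis abs_le_square_iff abs_ge_zero abs_of_nonneg order.trans)
  then have "F_s DIM('a) s \<rho> \<le> 2 * B\<^sup>2 / t\<^sup>2"
    using F_s_le_half_square[OF s, of "DIM('a)" \<rho>] by (simp add: power_divide power_mult_distrib)
  then have "F_s DIM('a) s \<rho> / t powr q \<le> 2 * B\<^sup>2 / t\<^sup>2 / t powr q"
    by (rule divide_right_mono) simp
  also have "\<dots> = 2 * B\<^sup>2 * t powr - (real DIM('a) + 2 * s + 1)"
  proof -
    have "real DIM('a) + 2 * s + 1 = 2 + q" by (simp add: q_def)
    then have "t powr (real DIM('a) + 2 * s + 1) = t powr 2 * t powr q"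
      by (simp only: powr_add)
    also have "t powr 2 = t\<^sup>2" using t by simp
    finally have "t powr (real DIM('a) + 2 * s + 1) = t\<^sup>2 * t powr q" .
    then have "t powr - (real DIM('a) + 2 * s + 1) = 1 / (t\<^sup>2 * t powr q)"
      by (simp only: powr_minus_divide)
    then show ?thesis by simp
  qed
  finally have "F_s DIM('a) s \<rho> / t powr q \<le> 2 * B\<^sup>2 * t powr - (real DIM('a) + 2 * s + 1)" .
  moreover have "I_s_integrand s \<Omega> u (x, y) \<le> ennreal (F_s DIM('a) s \<rho> / t powr q)"
    by (simp add: I_s_integrand_def indicator_def dist_norm t_def q_def \<rho>_def)
  ultimately show ?thesis
    unfolding t_def by (meson ennreal_leI order.trans)
qed

lemma I_s_integrand_le_of_eq_on:
  fixes \<Omega> U :: "'a::euclidean_space set" and s :: real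
  defines "p \<equiv> real DIM('a) + 2 * s + 1"
  assumes s: "0 \<le> s" and R: "0 < R" and sub: "\<Omega> \<subseteq> U" and agree: "\<forall>x\<in>U. u x = w x"
    and far: "\<forall>y\<in>\<Omega>. \<forall>x. x \<notin> U \<longrightarrow> R \<le> dist y x"
    and B: "\<bar>u x\<bar> \<le> B" "\<bar>u y\<bar> \<le> B"
  shows "I_s_integrand s \<Omega> u (x, y)
    \<le> I_s_integrand s \<Omega> w (x, y) + ennreal (2 * B\<^sup>2) * (tail_kernel \<Omega> R p (x, y) + tail_kernel \<Omega> R p (y, x))"
proof (cases "(x, y) \<in> Q_set \<Omega> \<and> \<not> (x \<in> U \<and> y \<in> U)")
  case False
  then have "I_s_integrand s \<Omega> u (x, y) \<le> I_s_integrand s \<Omega> w (x, y)"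
    using agree by (auto simp: I_s_integrand_def)
  then show ?thesis by (simp add: add_increasing2)
next
  case True
  then have "(x \<in> \<Omega> \<and> y \<notin> U) \<or> (y \<in> \<Omega> \<and> x \<notin> U)"
    using sub by (auto simp: Q_set_def)
  then have tail: "(x \<in> \<Omega> \<or> y \<in> \<Omega>) \<and> R \<le> dist x y"
    using far by (auto simp: dist_commute)
  then have "x \<noteq> y" using R by auto
  then have "I_s_integrand s \<Omega> u (x, y) \<le> ennreal (2 * B\<^sup>2) * ennreal (dist x y powr - p)"
    using I_s_integrand_le_dist_powr[where u=u and x=x and y=y, OF s B] by (simp add: p_def ennreal_mult)
  also have "\<dots> \<le> ennreal (2 * B\<^sup>2) * (tail_kernel \<Omega> R p (x, y) + tail_kernel \<Omega> R p (y, x))"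
    using tail by (intro mult_left_mono) (auto simp: tail_kernel_def dist_commute)
  finally show ?thesis by (simp add: add_increasing)
qed

lemma I_s_le_of_eq_on:
  fixes \<Omega> U :: "'a::euclidean_space set"
  assumes s: "0 < s" and R: "0 < R" and \<Omega>: "\<Omega> \<in> sets borel"
    and sub: "\<Omega> \<subseteq> U" and agree: "\<forall>x\<in>U. u x = w x"
    and far: "\<forall>y\<in>\<Omega>. \<forall>x. x \<notin> U \<longrightarrow> R \<le> dist y x"
    and B: "AE x in lebesgue. \<bar>u x\<bar> \<le> B"
  shows "I_s s \<Omega> u \<le> I_s s \<Omega> w + ennreal (4 * B\<^sup>2) * emeasure lborel \<Omega>
    * ennreal (dyadic_tail_bound DIM('a) (real DIM('a) + 2 * s + 1) R)"
proof -
  define p where "p = real DIM('a) + 2 * s + 1"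
  have p: "real DIM('a) < p" using s by (simp add: p_def)
  define K where "K = tail_kernel \<Omega> R p"
  define k where "k z = ennreal (2 * B\<^sup>2) * (K z + K (snd z, fst z))" for z
  have K[measurable]: "K \<in> borel_measurable (lborel \<Otimes>\<^sub>M lborel)"
    unfolding K_def by (rule tail_kernel_measurable[OF \<Omega>])
  have "(\<lambda>z. K (snd z, fst z)) \<in> borel_measurable (lborel \<Otimes>\<^sub>M lborel)" by measurable
  note K_lebesgue[measurable] =
    K[unfolded lborel_prod, THEN measurable_completion] this[unfolded lborel_prod, THEN measurable_completion]
  have k: "k \<in> borel_measurable lebesgue" unfolding k_def by measurable
  have "AE z in lebesgue. I_s_integrand s \<Omega> u z \<le> I_s_integrand s \<Omega> w z + k z"
    using AE_lebesgue_pair[OF B]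
  proof eventually_elim
    case (elim z)
    then show ?case
      using I_s_integrand_le_of_eq_on[of s R \<Omega> U u w "fst z" B "snd z"] s R sub agree far
      by (simp add: k_def K_def p_def)
  qed
  then have "I_s s \<Omega> u \<le> (\<integral>\<^sup>+ z. I_s_integrand s \<Omega> w z + k z \<partial>lebesgue)"
    unfolding I_s_eq_nn_integral_integrand by (rule nn_integral_mono_AE)
  also have "\<dots> \<le> I_s s \<Omega> w + (\<integral>\<^sup>+ z. k z \<partial>lebesgue)"
    unfolding I_s_eq_nn_integral_integrand by (rule nn_integral_add_le[OF k])
  also have "(\<integral>\<^sup>+ z. k z \<partial>lebesgue)
      = ennreal (2 * B\<^sup>2) * ((\<integral>\<^sup>+ z. K z \<partial>lebesgue) + (\<integral>\<^sup>+ z. K (snd z, fst z) \<partial>lebesgue))"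
    unfolding k_def nn_integral_add[OF K_lebesgue, symmetric]
    by (rule nn_integral_cmult) (intro borel_measurable_add K_lebesgue)
  also have "\<dots> = ennreal (2 * B\<^sup>2) * (2 * (\<integral>\<^sup>+ z. K z \<partial>lebesgue))"
    unfolding nn_integral_lebesgue_pair_swap[OF K] mult_2 ..
  also have "\<dots> \<le> ennreal (2 * B\<^sup>2) * (2 * (emeasure lborel \<Omega> * ennreal (dyadic_tail_bound DIM('a) p R)))"
    unfolding K_def by (intro mult_left_mono nn_integral_tail_kernel_le[OF R p \<Omega>]) auto
  also have "\<dots> = ennreal (4 * B\<^sup>2) * emeasure lborel \<Omega> * ennreal (dyadic_tail_bound DIM('a) p R)"
    by (simp add: ennreal_mult mult.assoc mult.left_commute)
  finally show ?thesis by (simp add: p_def add_left_mono)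
qed

lemma dist_ge_of_frontier_infdist:
  fixes U \<Omega> :: "'a::euclidean_space set"
  assumes fr: "\<forall>z\<in>frontier U. a \<le> infdist z (closure \<Omega>)" and sub: "\<Omega> \<subseteq> U"
    and y: "y \<in> \<Omega>" and x: "x \<notin> U"
  shows "a \<le> dist y x"
proof -
  have "closed_segment y x \<inter> U \<noteq> {}" using y sub by auto
  moreover have "closed_segment y x - U \<noteq> {}" using x by auto
  ultimately have "closed_segment y x \<inter> frontier U \<noteq> {}"
    by (intro connected_Int_frontier) auto
  then obtain z where z: "z \<in> closed_segment y x" "z \<in> frontier U" by auto
  have "a \<le> infdist z (closure \<Omega>)" using fr z by auto
  also have "\<dots> \<le> dist z y" using y by (intro infdist_le) (auto intro: closure_subset[THEN subsetD])
  also have "\<dots> \<le> dist y x" using dist_in_closed_segment[OF z(1)] by simp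
  finally show ?thesis .
qed

lemma I_s_le_of_eq_near:
  fixes \<Omega> U :: "'a::euclidean_space set"
  assumes s: "0 < s" and c: "0 < c" and H: "0 < H" and \<Omega>: "open \<Omega>" "bounded \<Omega>"
    and sub: "\<Omega> \<subseteq> U" and frontier: "\<forall>z\<in>frontier U. c * H \<le> infdist z (closure \<Omega>)"
    and agree: "\<forall>x\<in>U. u x = w x" and B: "AE x in lebesgue. \<bar>u x\<bar> \<le> B"
    and C: "4 * B\<^sup>2 * measure lborel \<Omega> * dyadic_tail_bound DIM('a) (real DIM('a) + 2 * s + 1) c \<le> C"
  shows "I_s s \<Omega> u \<le> I_s s \<Omega> w + ennreal (C * H powr (- 1 - 2 * s))"
proof -
  define T where "T = dyadic_tail_bound DIM('a) (real DIM('a) + 2 * s + 1) c"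
  have T: "0 \<le> T" unfolding T_def using s by (intro dyadic_tail_bound_nonneg) simp
  have far: "\<forall>y\<in>\<Omega>. \<forall>x. x \<notin> U \<longrightarrow> c * H \<le> dist y x"
    using dist_ge_of_frontier_infdist[OF frontier sub] by blast
  have "I_s s \<Omega> u \<le> I_s s \<Omega> w + ennreal (4 * B\<^sup>2) * emeasure lborel \<Omega>
      * ennreal (dyadic_tail_bound DIM('a) (real DIM('a) + 2 * s + 1) (c * H))"
    using \<Omega>(1) by (intro I_s_le_of_eq_on[OF s _ _ sub agree far B]) (auto simp: c H)
  also have "emeasure lborel \<Omega> = ennreal (measure lborel \<Omega>)"
    using emeasure_bounded_finite[OF \<Omega>(2)] by (simp add: emeasure_eq_ennreal_measure)
  also have "dyadic_tail_bound DIM('a) (real DIM('a) + 2 * s + 1) (c * H) = T * H powr (- 1 - 2 * s)"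
    unfolding T_def using dyadic_tail_bound_mult[OF c H, of "DIM('a)" "real DIM('a) + 2 * s + 1"]
    by (simp add: algebra_simps)
  also have "ennreal (4 * B\<^sup>2) * ennreal (measure lborel \<Omega>) * ennreal (T * H powr (- 1 - 2 * s))
      = ennreal (4 * B\<^sup>2 * measure lborel \<Omega> * T * H powr (- 1 - 2 * s))"
    using T by (simp add: ennreal_mult mult.assoc)
  also have "\<dots> \<le> ennreal (C * H powr (- 1 - 2 * s))"
    using C unfolding T_def by (intro ennreal_leI mult_right_mono) auto
  finally show ?thesis by (simp add: add_left_mono)
qed

lemma abs_trunc_op_le:
  assumes "\<forall>x\<in>- \<Omega>. 0 \<le> \<eta> x \<and> \<eta> x \<le> 1"
  shows "\<bar>trunc_op \<Omega> \<eta> v x\<bar> \<le> \<bar>v x\<bar>"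
  using assms by (auto simp: trunc_op_def abs_mult mult_left_le)

lemma abs_ext_op_le:
  assumes "\<forall>x\<in>- \<Omega>. 0 \<le> \<eta> x \<and> \<eta> x \<le> 1" and "\<bar>w x\<bar> \<le> M" and "x \<notin> \<Omega> \<Longrightarrow> \<bar>g x\<bar> \<le> M"
  shows "\<bar>ext_op \<Omega> \<eta> g w x\<bar> \<le> 2 * M"
proof (cases "x \<in> \<Omega>")
  case False
  then have "\<bar>1 - \<eta> x\<bar> \<le> 1" using assms(1) by auto
  then have "\<bar>(1 - \<eta> x) * g x\<bar> \<le> \<bar>g x\<bar>" by (simp add: abs_mult mult_left_le_one_le)
  then have "\<bar>(1 - \<eta> x) * g x\<bar> \<le> M" using assms(3) False by linarith
  then show ?thesis
    using False assms(2) abs_triangle_ineq[of "w x" "(1 - \<eta> x) * g x"] by (simp add: ext_op_def)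
qed (use assms(2) in \<open>simp add: ext_op_def\<close>)

lemma I_s_trunc_op_close:
  fixes \<Omega> U :: "'a::euclidean_space set"
  assumes s: "0 < s" and c: "0 < c" and H: "0 < H" and \<Omega>: "open \<Omega>" "bounded \<Omega>"
    and U: "\<Omega> \<subseteq> U" "\<forall>z\<in>frontier U. c * H \<le> infdist z (closure \<Omega>)"
    and \<eta>: "\<forall>x\<in>- \<Omega>. 0 \<le> \<eta> x \<and> \<eta> x \<le> 1" "\<forall>x\<in>U - \<Omega>. \<eta> x = 1"
    and C: "4 * M\<^sup>2 * measure lborel \<Omega> * dyadic_tail_bound DIM('a) (real DIM('a) + 2 * s + 1) c \<le> C"
    and v: "Linf_bound UNIV v M"
  shows "I_s s \<Omega> v \<le> I_s s \<Omega> (trunc_op \<Omega> \<eta> v) + ennreal (C * H powr (- 1 - 2 * s)) \<and>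
    I_s s \<Omega> (trunc_op \<Omega> \<eta> v) \<le> I_s s \<Omega> v + ennreal (C * H powr (- 1 - 2 * s))"
proof -
  have v_bound: "AE x in lebesgue. \<bar>v x\<bar> \<le> M" using v by (simp add: Linf_bound_def)
  then have "AE x in lebesgue. \<bar>trunc_op \<Omega> \<eta> v x\<bar> \<le> M"
    by (rule eventually_mono) (use abs_trunc_op_le[OF \<eta>(1)] in \<open>rule order.trans\<close>)
  moreover have "\<forall>x\<in>U. v x = trunc_op \<Omega> \<eta> v x" "\<forall>x\<in>U. trunc_op \<Omega> \<eta> v x = v x"
    using \<eta>(2) by (auto simp: trunc_op_def)
  ultimately show ?thesis
    using v_bound by (blast intro: I_s_le_of_eq_near[OF s c H \<Omega> U _ _ C])
qed

lemma I_s_ext_op_close: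
  fixes \<Omega> U :: "'a::euclidean_space set"
  assumes s: "0 < s" and c: "0 < c" and H: "0 < H" and \<Omega>: "open \<Omega>" "bounded \<Omega>"
    and U: "\<Omega> \<subseteq> U" "\<forall>z\<in>frontier U. c * H \<le> infdist z (closure \<Omega>)"
    and \<eta>: "\<forall>x\<in>- \<Omega>. 0 \<le> \<eta> x \<and> \<eta> x \<le> 1" "\<forall>x\<in>U - \<Omega>. \<eta> x = 1"
    and C: "4 * (2 * M)\<^sup>2 * measure lborel \<Omega> * dyadic_tail_bound DIM('a) (real DIM('a) + 2 * s + 1) c \<le> C"
    and M: "0 \<le> M" and g: "Linf_bound (- \<Omega>) g M" and w: "Linf_bound UNIV w M"
  shows "I_s s \<Omega> w \<le> I_s s \<Omega> (ext_op \<Omega> \<eta> g w) + ennreal (C * H powr (- 1 - 2 * s)) \<and>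
    I_s s \<Omega> (ext_op \<Omega> \<eta> g w) \<le> I_s s \<Omega> w + ennreal (C * H powr (- 1 - 2 * s))"
proof -
  have w_bound: "AE x in lebesgue. \<bar>w x\<bar> \<le> M" using w by (simp add: Linf_bound_def)
  have g_bound: "AE x in lebesgue. x \<notin> \<Omega> \<longrightarrow> \<bar>g x\<bar> \<le> M" using g by (simp add: Linf_bound_def)
  have "AE x in lebesgue. \<bar>w x\<bar> \<le> 2 * M" using w_bound M by (auto elim!: eventually_mono)
  moreover have "AE x in lebesgue. \<bar>ext_op \<Omega> \<eta> g w x\<bar> \<le> 2 * M"
    using w_bound g_bound by eventually_elim (rule abs_ext_op_le[OF \<eta>(1)]; simp)
  moreover have "\<forall>x\<in>U. w x = ext_op \<Omega> \<eta> g w x" "\<forall>x\<in>U. ext_op \<Omega> \<eta> g w x = w x"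
    using \<eta>(2) by (auto simp: ext_op_def)
  ultimately show ?thesis
    by (blast intro: I_s_le_of_eq_near[OF s c H \<Omega> U _ _ C])
qed

theorem mainTheorem3:
  fixes \<Omega> :: "'a::euclidean_space set" and s c1 c2 M :: real
  assumes "0 < s" "s < 1/2"
    and "open \<Omega>" "connected \<Omega>" "bounded \<Omega>" "\<Omega> \<noteq> {}"
    and "0 < c1" "c1 \<le> c2" "0 \<le> M"
  shows "\<exists>C>0. \<forall>(OmH :: real \<Rightarrow> 'a set) (eta :: real \<Rightarrow> 'a \<Rightarrow> real) (g :: 'a \<Rightarrow> real).
     (\<forall>H>0. open (OmH H) \<and> bounded (OmH H) \<and> \<Omega> \<subseteq> OmH H \<and>
         (\<forall>x\<in>frontier (OmH H). c1 * H \<le> infdist x (closure \<Omega>) \<and> infdist x (closure \<Omega>) \<le> c2 * H)) \<longrightarrow>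
     (\<forall>H>0. (\<exists>\<phi>. smooth_on UNIV \<phi> \<and> (\<forall>x\<in>- \<Omega>. eta H x = \<phi> x)) \<and>
         (\<forall>x\<in>- \<Omega>. 0 \<le> eta H x \<and> eta H x \<le> 1) \<and>
         closure {x\<in>- \<Omega>. eta H x \<noteq> 0} \<subseteq> closure (OmH (H + 1)) - \<Omega> \<and>
         (\<forall>x\<in>OmH H - \<Omega>. eta H x = 1)) \<longrightarrow>
     Linf_bound (- \<Omega>) g M \<longrightarrow>
     (\<forall>H\<ge>1.
        (\<forall>v\<in>V_space s \<Omega> g. Linf_bound UNIV v M \<longrightarrow>
           I_s s \<Omega> v \<le> I_s s \<Omega> (trunc_op \<Omega> (eta H) v) + ennreal (C * H powr (-1 - 2 * s)) \<and>
           I_s s \<Omega> (trunc_op \<Omega> (eta H) v) \<le> I_s s \<Omega> v + ennreal (C * H powr (-1 - 2 * s))) \<and>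
        (\<forall>w\<in>V_space s \<Omega> (\<lambda>x. g x * eta H x). Linf_bound UNIV w M \<longrightarrow>
           I_s s \<Omega> w \<le> I_s s \<Omega> (ext_op \<Omega> (eta H) g w) + ennreal (C * H powr (-1 - 2 * s)) \<and>
           I_s s \<Omega> (ext_op \<Omega> (eta H) g w) \<le> I_s s \<Omega> w + ennreal (C * H powr (-1 - 2 * s))))"
proof -
  define K where
    "K = 4 * (2 * M)\<^sup>2 * measure lborel \<Omega> * dyadic_tail_bound DIM('a) (real DIM('a) + 2 * s + 1) c1"
  have mT: "0 \<le> measure lborel \<Omega> * dyadic_tail_bound DIM('a) (real DIM('a) + 2 * s + 1) c1"
    using assms(1) by (simp add: dyadic_tail_bound_nonneg)
  then have K: "0 \<le> K" unfolding K_def by (simp add: mult.assoc)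
  have K_ext: "4 * (2 * M)\<^sup>2 * measure lborel \<Omega> * dyadic_tail_bound DIM('a) (real DIM('a) + 2 * s + 1) c1
      \<le> K + 1"
    unfolding K_def by simp
  have "4 * M\<^sup>2 * (measure lborel \<Omega> * dyadic_tail_bound DIM('a) (real DIM('a) + 2 * s + 1) c1)
      \<le> 4 * (2 * M)\<^sup>2 * (measure lborel \<Omega> * dyadic_tail_bound DIM('a) (real DIM('a) + 2 * s + 1) c1)"
    using mT by (intro mult_right_mono) (simp_all add: power_mult_distrib)
  then have K_trunc:
    "4 * M\<^sup>2 * measure lborel \<Omega> * dyadic_tail_bound DIM('a) (real DIM('a) + 2 * s + 1) c1 \<le> K + 1"
    unfolding K_def by (simp add: mult.assoc)
  show ?thesis
  proof (intro exI[of _ "K + 1"] conjI allI impI, goal_cases)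
    case 1
    show ?case using K by simp
  next
    case (2 OmH eta g H)
    then have "0 < H" "\<Omega> \<subseteq> OmH H" "\<forall>z\<in>frontier (OmH H). c1 * H \<le> infdist z (closure \<Omega>)"
      "\<forall>x\<in>- \<Omega>. 0 \<le> eta H x \<and> eta H x \<le> 1" "\<forall>x\<in>OmH H - \<Omega>. eta H x = 1"
      by auto
    then show ?case using I_s_trunc_op_close[OF assms(1,7) _ assms(3,5) _ _ _ _ K_trunc] by blast
  next
    case (3 OmH eta g H)
    then have "0 < H" "\<Omega> \<subseteq> OmH H" "\<forall>z\<in>frontier (OmH H). c1 * H \<le> infdist z (closure \<Omega>)"
      "\<forall>x\<in>- \<Omega>. 0 \<le> eta H x \<and> eta H x \<le> 1" "\<forall>x\<in>OmH H - \<Omega>. eta H x = 1"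
      by auto
    then show ?case using I_s_ext_op_close[OF assms(1,7) _ assms(3,5) _ _ _ _ K_ext assms(9)] 3 by blast
  qed
qed

end
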